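(* Let $X,K$ be topological spaces, $f:X\times K\to\mathbb R$ separately continuous, and $\phi:K\to C_p(X)$ given by $\phi(y)(x)=f(x,y)$. Suppose there exist a set $\Gamma\subseteq\mathbb R^X$ and a sequence $(\mathcal U_n)_{n\in\mathbb N}$ of countable covers of $K$ such that $X$ is $\sigma_\Gamma$-$\beta$-defavorable and $(\mathcal U_n)_{n\in\mathbb N}$ is countably pair complete with respect to $(\phi,\Gamma)$. Then for every $\varepsilon>0$ there is a residual subset $R_\varepsilon$ of $X$ such that for every $(x,y)\in R_\varepsilon\times K$ there are finitely many sets $F_i\in\mathcal U_i$, $i=0,\dots,k$, with $y\in\bigcap_{i\le k}F_i$, and a neighborhood $O$ of $(x,y)$ in $X\times K$ such that $|f(x,y)-f(x',y')|<\varepsilon$ for every $(x',y')\in O\cap\big(X\times\bigcap_{i\le k}F_i\big)$.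
   Context: $f$ is separately continuous if $f(x,\cdot)$ and $f(\cdot,y)$ are continuous for all $x\in X$, $y\in K$. $C_p(X)$ is the space of real continuous functions on $X$ with the pointwise convergence topology; $\mathbb R^X$ carries the product topology. A decreasing sequence $(U_n)$ of subsets of $K$ is countably pair complete with respect to $(\phi,\Gamma)$ if for any sequences $(y_n),(z_n)$ with $y_n,z_n\in U_n$ for all $n$, the sequence $(\phi(y_n)-\phi(z_n))_n$ has at least one cluster point in $\mathbb R^X$ belonging to $\Gamma$. A sequence of covers $\mathcal U_n=\{U^n_k:k\in\mathbb N\}$ of $K$ is countably pair complete with respect to $(\phi,\Gamma)$ if for each $\sigma\in\mathbb N^{\mathbb N}$ the sequence $(\bigcap_{i\le n}U^i_{\sigma(i)})_{n}$ is. The game $\mathcal J_\Gamma$ on $X$: $\beta$ first chooses a nonempty open $V_0\subseteq X$, then $\alpha$ chooses a nonempty open $U_0\subseteq V_0$ and $a_0\in X$; at step $n+1$, $\beta$ chooses a nonempty open $V_{n+1}\subseteq U_n$ and $\alpha$ a nonempty open $U_{n+1}\subseteq V_{n+1}$ and $a_{n+1}\in X$. $\alpha$ wins iff for each $g\in\Gamma$ there is $t\in\bigcap_nU_n$ with $g(t)\in\overline{\{g(a_n):n\in\mathbb N\}}$. $X$ is $\sigma_\Gamma$-$\beta$-defavorable if $\beta$ has no winning strategy in $\mathcal J_\Gamma$. A set is residual if its complement is of first category. *)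

theory Defs
  imports "HOL-Analysis.Analysis"
begin

text \<open>R^X carries the product topology (instance of the function type in Function_Topology).\<close>

definition nowhere_dense :: "'a::topological_space set \<Rightarrow> bool" where
  "nowhere_dense S \<longleftrightarrow> interior (closure S) = {}"

definition first_category :: "'a::topological_space set \<Rightarrow> bool" where
  "first_category A \<longleftrightarrow> (\<exists>N :: nat \<Rightarrow> 'a set. (\<forall>n. nowhere_dense (N n)) \<and> A \<subseteq> (\<Union>n. N n))"

definition residual :: "'a::topological_space set \<Rightarrow> bool" where
  "residual R \<longleftrightarrow> first_category (- R)"

definition separately_continuous :: "('a::topological_space \<Rightarrow> 'b::topological_space \<Rightarrow> real) \<Rightarrow> bool" where
  "separately_continuous f \<longleftrightarrow> (\<forall>x. continuous_on UNIV (f x)) \<and> (\<forall>y. continuous_on UNIV (\<lambda>x. f x y))"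

definition seq_cluster_point :: "(nat \<Rightarrow> 'a::topological_space) \<Rightarrow> 'a \<Rightarrow> bool" where
  "seq_cluster_point s z \<longleftrightarrow> (\<forall>W. open W \<longrightarrow> z \<in> W \<longrightarrow> (\<exists>\<^sub>F n in sequentially. s n \<in> W))"

definition seq_pair_complete ::
  "('b \<Rightarrow> ('a \<Rightarrow> real)) \<Rightarrow> ('a \<Rightarrow> real) set \<Rightarrow> (nat \<Rightarrow> 'b set) \<Rightarrow> bool" where
  "seq_pair_complete \<phi> \<Gamma> V \<longleftrightarrow>
     (\<forall>y z :: nat \<Rightarrow> 'b. (\<forall>n. y n \<in> V n \<and> z n \<in> V n) \<longrightarrow>
        (\<exists>g\<in>\<Gamma>. seq_cluster_point (\<lambda>n. \<phi> (y n) - \<phi> (z n)) g))"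

text \<open>Covers: U n k is the k-th member of the n-th countable cover.\<close>
definition covers_pair_complete ::
  "('b \<Rightarrow> ('a \<Rightarrow> real)) \<Rightarrow> ('a \<Rightarrow> real) set \<Rightarrow> (nat \<Rightarrow> nat \<Rightarrow> 'b set) \<Rightarrow> bool" where
  "covers_pair_complete \<phi> \<Gamma> U \<longleftrightarrow>
     (\<forall>\<sigma> :: nat \<Rightarrow> nat. seq_pair_complete \<phi> \<Gamma> (\<lambda>n. \<Inter>i\<in>{..n}. U i (\<sigma> i)))"

text \<open>The game J_Gamma. A history is the list of alpha's moves (U_0,a_0),...,(U_n,a_n);
  a strategy of beta maps histories to beta's next move (the empty history gives V_0).\<close>
definition legal_history :: "(('a::topological_space set \<times> 'a) list \<Rightarrow> 'a set) \<Rightarrow> ('a set \<times> 'a) list \<Rightarrow> bool" where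
  "legal_history s h \<longleftrightarrow>
     (\<forall>i<length h. open (fst (h ! i)) \<and> fst (h ! i) \<noteq> {} \<and> fst (h ! i) \<subseteq> s (take i h))"

definition beta_strategy :: "(('a::topological_space set \<times> 'a) list \<Rightarrow> 'a set) \<Rightarrow> bool" where
  "beta_strategy s \<longleftrightarrow> open (s []) \<and> s [] \<noteq> {} \<and>
     (\<forall>h. legal_history s h \<and> h \<noteq> [] \<longrightarrow> open (s h) \<and> s h \<noteq> {} \<and> s h \<subseteq> fst (last h))"

definition play_follows :: "(('a::topological_space set \<times> 'a) list \<Rightarrow> 'a set) \<Rightarrow> (nat \<Rightarrow> 'a set) \<Rightarrow> (nat \<Rightarrow> 'a) \<Rightarrow> bool" where
  "play_follows s U a \<longleftrightarrow>
     (\<forall>n. open (U n) \<and> U n \<noteq> {} \<and> U n \<subseteq> s (map (\<lambda>i. (U i, a i)) [0..<n]))"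

definition alpha_wins :: "('a \<Rightarrow> real) set \<Rightarrow> (nat \<Rightarrow> 'a set) \<Rightarrow> (nat \<Rightarrow> 'a) \<Rightarrow> bool" where
  "alpha_wins \<Gamma> U a \<longleftrightarrow>
     (\<forall>g\<in>\<Gamma>. \<exists>t\<in>(\<Inter>n. U n). g t \<in> closure {g (a n) | n. True})"

definition sigma_beta_defavorable :: "('a::topological_space \<Rightarrow> real) set \<Rightarrow> bool" where
  "sigma_beta_defavorable \<Gamma> \<longleftrightarrow>
     \<not> (\<exists>s. beta_strategy s \<and> (\<forall>U a. play_follows s U a \<longrightarrow> \<not> alpha_wins \<Gamma> U a))"

end

theory Submission
  imports Defs
begin

text \<open>
  Fix \<open>\<epsilon>\<close> and index the finite intersections of the covers by lists \<open>\<tau>\<close> (cells). An open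
  set is controlled on a cell if, for \<open>y, z\<close> in the cell, closeness (\<open>< \<epsilon>/6\<close>) of \<open>f(-,y)\<close> and
  \<open>f(-,z)\<close> at finitely many points forces \<open>|f(t,y) - f(t,z)| \<le> \<epsilon>/3\<close> on the set; near such an
  \<open>x\<close> the oscillation of \<open>f\<close> over the cell is then below \<open>\<epsilon>/3 + \<epsilon>/3\<close>. By Banach's category
  theorem the set of points uncontrolled for some \<open>y\<close> of a cell is, up to a meagre set, contained
  in the interior of the points where it is of second category (its bad core); the countably
  many meagre remainders form the complement of \<open>R\<^sub>\<epsilon>\<close>. Outside it a nonempty bad core
  would give \<beta> a winning strategy in \<open>\<J>\<^sub>\<Gamma>\<close>: \<beta> stays inside bad cores of ever longer cells and
  records \<open>y\<^sub>n, z\<^sub>n\<close> in the current cell with \<open>f(-,y\<^sub>n) - f(-,z\<^sub>n)\<close> smaller than \<open>\<epsilon>/6\<close> at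
  \<alpha>'s earlier points \<open>a\<^sub>m\<close> but larger than \<open>\<epsilon>/3\<close> on its own move. Pair completeness yields a
  cluster point \<open>g \<in> \<Gamma>\<close> of these differences, with \<open>|g| \<ge> \<epsilon>/3\<close> on \<open>\<Inter>U\<^sub>n\<close> and \<open>|g(a\<^sub>m)| \<le> \<epsilon>/6\<close>,
  so \<alpha> cannot win.
\<close>

lemma nowhere_dense_iff: "nowhere_dense S \<longleftrightarrow> (\<forall>V. open V \<longrightarrow> V \<subseteq> closure S \<longrightarrow> V = {})"
  unfolding nowhere_dense_def
proof
  assume "interior (closure S) = {}"
  then show "\<forall>V. open V \<longrightarrow> V \<subseteq> closure S \<longrightarrow> V = {}"
    by (metis interior_maximal subset_empty)
qed (meson open_interior interior_subset)

lemma nowhere_dense_frontier: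
  assumes "open S" shows "nowhere_dense (frontier S)"
  unfolding nowhere_dense_iff
proof (intro allI impI)
  fix V assume V: "open V" "V \<subseteq> closure (frontier S)"
  have "closure (frontier S) = closure S - S"
    using assms frontier_closed[of S] unfolding frontier_def by (simp add: interior_open)
  with V have "V \<subseteq> closure S" "V \<inter> S = {}" by auto
  then show "V = {}" using open_Int_closure_eq_empty[OF V(1), of S] by blast
qed

lemma first_category_subset: "first_category A \<Longrightarrow> B \<subseteq> A \<Longrightarrow> first_category B"
  unfolding first_category_def by blast

lemma first_category_nowhere_dense: "nowhere_dense A \<Longrightarrow> first_category A"
  unfolding first_category_def by (intro exI[of _ "\<lambda>_. A"]) auto

lemma first_category_UN:
  fixes A :: "'i::countable \<Rightarrow> 'a::topological_space set"
  assumes "\<And>i. first_category (A i)"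
  shows "first_category (\<Union>i. A i)"
proof -
  obtain N :: "'i \<Rightarrow> nat \<Rightarrow> 'a set" where N: "\<And>i m. nowhere_dense (N i m)" "\<And>i. A i \<subseteq> (\<Union>m. N i m)"
    using assms unfolding first_category_def by metis
  define L where "L j = (case prod_decode j of (n, m) \<Rightarrow> N (from_nat n) m)" for j
  have "nowhere_dense (L j)" for j
    using N(1) by (simp add: L_def split: prod.split)
  moreover have "(\<Union>i. A i) \<subseteq> (\<Union>j. L j)"
  proof
    fix x assume "x \<in> (\<Union>i. A i)"
    then obtain i m where "x \<in> N i m" using N(2) by blast
    then have "x \<in> L (prod_encode (to_nat i, m))" by (simp add: L_def)
    then show "x \<in> (\<Union>j. L j)" by blast
  qed
  ultimately show ?thesis unfolding first_category_def by blast
qed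

lemma first_category_Un: "first_category A \<Longrightarrow> first_category B \<Longrightarrow> first_category (A \<union> B)"
  using first_category_UN[of "\<lambda>b. if b then A else B"] by (simp add: UNIV_bool Un_commute)

lemma maximal_disjoint_subfamily:
  obtains \<M> where "\<M> \<subseteq> \<S>" "disjoint \<M>" "\<And>W. W \<in> \<S> \<Longrightarrow> disjnt W (\<Union>\<M>) \<Longrightarrow> W = {}"
proof -
  let ?Fam = "{\<M>. \<M> \<subseteq> \<S> \<and> disjoint \<M>}"
  have chain_Union: "\<Union>C \<in> ?Fam" if "C \<in> chains ?Fam" for C
  proof -
    have "C \<subseteq> ?Fam" and ch: "chain\<^sub>\<subseteq> C" using that unfolding chains_def by simp_all
    moreover have "disjoint (\<Union>C)"
    proof (rule pairwiseI)
      fix W1 W2 assume "W1 \<in> \<Union>C" "W2 \<in> \<Union>C" "W1 \<noteq> W2"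
      then obtain c where "c \<in> C" "W1 \<in> c" "W2 \<in> c"
        using ch unfolding chain_subset_def by blast
      then show "disjnt W1 W2" using \<open>C \<subseteq> ?Fam\<close> \<open>W1 \<noteq> W2\<close> unfolding pairwise_def by blast
    qed
    ultimately show ?thesis by blast
  qed
  obtain \<M> where "\<M> \<in> ?Fam" and max: "\<And>X. X \<in> ?Fam \<Longrightarrow> \<M> \<subseteq> X \<Longrightarrow> X = \<M>"
    using Zorn_Lemma[OF ballI[OF chain_Union]] by metis
  then have M: "\<M> \<subseteq> \<S>" "disjoint \<M>" by simp_all
  have "W = {}" if W: "W \<in> \<S>" "disjnt W (\<Union>\<M>)" for W
  proof (rule ccontr)
    assume "W \<noteq> {}"
    then have "W \<notin> \<M>"
      using W(2) by (auto simp: disjnt_def)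
    moreover have "disjnt W V" "disjnt V W" if "V \<in> \<M>" for V
      using W(2) that by (auto simp: disjnt_def)
    then have "insert W \<M> \<in> ?Fam"
      using M W(1) by (simp add: pairwise_insert)
    ultimately show False
      using max[of "insert W \<M>"] by blast
  qed
  with M show ?thesis
    by (rule that)
qed

lemma nowhere_dense_disjoint_Union:
  assumes "disjoint \<M>" "\<And>W. W \<in> \<M> \<Longrightarrow> open W" "\<And>W. W \<in> \<M> \<Longrightarrow> nowhere_dense (N W)"
  shows "nowhere_dense (\<Union>W\<in>\<M>. N W \<inter> W)"
  unfolding nowhere_dense_iff
proof (intro allI impI)
  let ?S = "\<Union>W\<in>\<M>. N W \<inter> W"
  fix V assume V: "open V" "V \<subseteq> closure ?S"
  show "V = {}"
  proof (rule ccontr)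
    assume "V \<noteq> {}"
    with V have "V \<inter> ?S \<noteq> {}"
      using open_Int_closure_eq_empty[OF V(1), of ?S] by blast
    then obtain W x where W: "W \<in> \<M>" "x \<in> V \<inter> W" by auto
    have "W \<inter> ?S \<subseteq> N W"
    proof
      fix z assume "z \<in> W \<inter> ?S"
      then obtain W' where "W' \<in> \<M>" "z \<in> N W'" "z \<in> W'" "z \<in> W" by auto
      moreover from this have "W' = W"
        using assms(1) W(1) by (meson disjnt_iff pairwiseD)
      ultimately show "z \<in> N W" by simp
    qed
    have "W \<inter> closure ?S \<subseteq> closure (W \<inter> ?S)"
      by (rule open_Int_closure_subset[OF assms(2)[OF W(1)]])
    also have "\<dots> \<subseteq> closure (N W)"
      by (rule closure_mono) fact
    finally have "V \<inter> W \<subseteq> closure (N W)"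
      using V(2) by blast
    moreover have "open (V \<inter> W)"
      using V(1) assms(2)[OF W(1)] by blast
    ultimately have "V \<inter> W = {}"
      using assms(3)[OF W(1)] unfolding nowhere_dense_iff by blast
    with W(2) show False by blast
  qed
qed

lemma first_category_Int_disjoint_Union:
  assumes "disjoint \<M>" "\<And>W. W \<in> \<M> \<Longrightarrow> open W" "\<And>W. W \<in> \<M> \<Longrightarrow> first_category (A \<inter> W)"
  shows "first_category (A \<inter> \<Union>\<M>)"
proof -
  define N where "N W = (SOME N. (\<forall>n. nowhere_dense (N n)) \<and> A \<inter> W \<subseteq> (\<Union>n::nat. N n))" for W
  have "(\<forall>n. nowhere_dense (N W n)) \<and> A \<inter> W \<subseteq> (\<Union>n. N W n)" if "W \<in> \<M>" for W
    unfolding N_def using assms(3)[OF that] unfolding first_category_def by (rule someI_ex)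
  then have N: "\<And>W n. W \<in> \<M> \<Longrightarrow> nowhere_dense (N W n)"
    and cover: "\<And>W. W \<in> \<M> \<Longrightarrow> A \<inter> W \<subseteq> (\<Union>n. N W n)"
    by blast+
  have "nowhere_dense (\<Union>W\<in>\<M>. N W n \<inter> W)" for n
    using assms(1,2) N by (rule nowhere_dense_disjoint_Union[where N = "\<lambda>W. N W n"])
  then have "first_category (\<Union>n. \<Union>W\<in>\<M>. N W n \<inter> W)"
    by (rule first_category_UN[OF first_category_nowhere_dense])
  moreover have "A \<inter> \<Union>\<M> \<subseteq> (\<Union>n. \<Union>W\<in>\<M>. N W n \<inter> W)"
  proof
    fix x assume "x \<in> A \<inter> \<Union>\<M>"
    then obtain W where W: "W \<in> \<M>" "x \<in> A \<inter> W" by blast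
    with cover obtain n where "x \<in> N W n" by blast
    with W show "x \<in> (\<Union>n. \<Union>W\<in>\<M>. N W n \<inter> W)" by blast
  qed
  ultimately show ?thesis by (rule first_category_subset)
qed

definition second_category_at :: "'a::topological_space set \<Rightarrow> 'a \<Rightarrow> bool" where
  "second_category_at A x \<longleftrightarrow> (\<forall>W. open W \<longrightarrow> x \<in> W \<longrightarrow> \<not> first_category (A \<inter> W))"

theorem Banach_category_theorem:
  "first_category (A - interior {x. second_category_at A x})"
proof -
  let ?S = "{W. open W \<and> first_category (A \<inter> W)}"
  define L where "L = \<Union>?S"
  obtain \<M> where M: "\<M> \<subseteq> ?S" "disjoint \<M>" and max: "\<And>W. W \<in> ?S \<Longrightarrow> disjnt W (\<Union>\<M>) \<Longrightarrow> W = {}"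
    by (rule maximal_disjoint_subfamily) (rule that)
  have open_M: "open (\<Union>\<M>)" using M(1) by blast
  have "L \<subseteq> closure (\<Union>\<M>)"
  proof
    fix x assume "x \<in> L"
    then obtain W where W: "open W" "first_category (A \<inter> W)" "x \<in> W" unfolding L_def by blast
    have "first_category (A \<inter> (W - closure (\<Union>\<M>)))"
      by (rule first_category_subset[OF W(2)]) blast
    then have "W - closure (\<Union>\<M>) \<in> ?S"
      using W(1) by blast
    moreover have "disjnt (W - closure (\<Union>\<M>)) (\<Union>\<M>)"
      using closure_subset[of "\<Union>\<M>"] by (auto simp: disjnt_def)
    ultimately have "W - closure (\<Union>\<M>) = {}" by (rule max)
    with W(3) show "x \<in> closure (\<Union>\<M>)" by blast
  qed
  moreover have "{x. second_category_at A x} = - L"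
    unfolding second_category_at_def L_def by blast
  moreover have "open L" unfolding L_def by blast
  moreover have "frontier (\<Union>\<M>) = closure (\<Union>\<M>) - \<Union>\<M>" "frontier L = closure L - L"
    using open_M \<open>open L\<close> by (simp_all add: frontier_def interior_open)
  ultimately have "A - interior {x. second_category_at A x} \<subseteq>
      (A \<inter> \<Union>\<M>) \<union> (frontier (\<Union>\<M>) \<union> frontier L)"
    by (auto simp: interior_closure)
  moreover have "first_category (A \<inter> \<Union>\<M>)"
    using M by (intro first_category_Int_disjoint_Union) auto
  moreover have "first_category (frontier (\<Union>\<M>) \<union> frontier L)"
    using open_M \<open>open L\<close>
    by (simp add: first_category_Un first_category_nowhere_dense nowhere_dense_frontier)
  ultimately show ?thesis
    by (blast intro: first_category_Un first_category_subset)
qed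

lemma seq_cluster_point_in_closed:
  assumes "seq_cluster_point s g" "closed C" "eventually (\<lambda>n. s n \<in> C) sequentially"
  shows "g \<in> C"
proof (rule ccontr)
  assume "g \<notin> C"
  then have "\<exists>\<^sub>F n in sequentially. s n \<in> - C"
    using assms(1) open_Compl[OF assms(2)] unfolding seq_cluster_point_def by blast
  with assms(3) show False
    by (simp add: frequently_def)
qed

lemma continuous_on_abs_coordinate: "continuous_on UNIV (\<lambda>h :: 'a \<Rightarrow> real. \<bar>h x\<bar>)"
  by (intro continuous_on_rabs continuous_on_product_coordinates)

lemma legal_history_snocD:
  assumes "legal_history s (h @ [m])"
  shows "legal_history s h" "open (fst m)" "fst m \<noteq> {}" "fst m \<subseteq> s h"
proof -
  have *: "open (fst ((h @ [m]) ! i)) \<and> fst ((h @ [m]) ! i) \<noteq> {} \<and> fst ((h @ [m]) ! i) \<subseteq> s (take i (h @ [m]))"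
    if "i \<le> length h" for i
    using assms that unfolding legal_history_def by simp
  show "legal_history s h"
    unfolding legal_history_def
  proof (intro allI impI)
    fix i assume "i < length h"
    with *[of i] show "open (fst (h ! i)) \<and> fst (h ! i) \<noteq> {} \<and> fst (h ! i) \<subseteq> s (take i h)"
      by (simp add: nth_append)
  qed
  show "open (fst m)" "fst m \<noteq> {}" "fst m \<subseteq> s h"
    using *[of "length h"] by simp_all
qed

lemma play_follows_legal_history:
  assumes "play_follows s V a"
  shows "legal_history s (map (\<lambda>i. (V i, a i)) [0..<n])"
  using assms unfolding legal_history_def play_follows_def by (simp add: take_map)

lemma snoc_chain_eq_map_upt:
  assumes "length (L 0) = 1" "\<And>n. \<exists>k. L (Suc n) = L n @ [k]"
  shows "L n = map (\<lambda>i. L i ! i) [0..<Suc n]"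
proof -
  have "length (L n) = Suc n \<and> L n = map (\<lambda>i. L i ! i) [0..<Suc n]"
  proof (induction n)
    case 0
    with assms(1) show ?case by (cases "L 0") simp_all
  next
    case (Suc n)
    obtain k where k: "L (Suc n) = L n @ [k]" using assms(2) by blast
    with Suc.IH have "L (Suc n) ! Suc n = k" by (simp add: nth_append)
    with Suc.IH k show ?case by simp
  qed
  then show ?thesis ..
qed

locale oscillation_setting =
  fixes f :: "'a::topological_space \<Rightarrow> 'b::topological_space \<Rightarrow> real"
    and U :: "nat \<Rightarrow> nat \<Rightarrow> 'b set" and \<epsilon> :: real
  assumes separately_continuous: "separately_continuous f"
    and covers: "\<And>n. (\<Union>k. U n k) = UNIV"
    and eps_pos: "\<epsilon> > 0"
begin

lemma continuous_on_fst_arg: "continuous_on UNIV (\<lambda>x. f x y)"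
  and continuous_on_snd_arg: "continuous_on UNIV (f x)"
  using separately_continuous unfolding separately_continuous_def by blast+

definition cell :: "nat list \<Rightarrow> 'b set" where
  "cell \<tau> = (\<Inter>i<length \<tau>. U i (\<tau> ! i))"

definition controlled :: "nat list \<Rightarrow> 'a set \<Rightarrow> bool" where
  "controlled \<tau> W \<longleftrightarrow> (\<exists>A. finite A \<and> (\<forall>y\<in>cell \<tau>. \<forall>z\<in>cell \<tau>.
     (\<forall>a\<in>A. \<bar>f a y - f a z\<bar> < \<epsilon>/6) \<longrightarrow> (\<forall>t\<in>W. \<bar>f t y - f t z\<bar> \<le> \<epsilon>/3)))"

definition controlled_set :: "nat list \<Rightarrow> 'a set" where
  "controlled_set \<tau> = \<Union>{W. open W \<and> controlled \<tau> W}"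

definition uncontrolled :: "nat list \<Rightarrow> 'a set" where
  "uncontrolled \<tau> = {x. \<exists>y\<in>cell \<tau>. \<forall>\<tau>'. \<tau>' \<noteq> [] \<and> y \<in> cell \<tau>' \<longrightarrow> x \<notin> controlled_set \<tau>'}"

definition bad_core :: "nat list \<Rightarrow> 'a set" where
  "bad_core \<tau> = interior {x. second_category_at (uncontrolled \<tau>) x}"

lemma cell_snoc: "cell (\<tau> @ [k]) = cell \<tau> \<inter> U (length \<tau>) k"
proof -
  have "{..<length (\<tau> @ [k])} = insert (length \<tau>) {..<length \<tau>}" by auto
  then show ?thesis unfolding cell_def by (auto simp: nth_append)
qed

lemma cell_eq_INT_atMost:
  assumes "length \<tau> = Suc n" "\<And>i. i \<le> n \<Longrightarrow> \<tau> ! i = \<sigma> i"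
  shows "cell \<tau> = (\<Inter>i\<in>{..n}. U i (\<sigma> i))"
  unfolding cell_def assms(1) lessThan_Suc_atMost using assms(2) by (intro INF_cong) auto

lemma cell_map_upt: "cell (map \<sigma> [0..<Suc n]) = (\<Inter>i\<in>{..n}. U i (\<sigma> i))"
  by (rule cell_eq_INT_atMost) (simp_all add: nth_map_upt del: upt_Suc)

lemma open_controlled_set: "open (controlled_set \<tau>)"
  unfolding controlled_set_def by blast

lemma controlled_set_oscillation:
  assumes "x \<in> controlled_set \<tau>" "y \<in> cell \<tau>"
  obtains G where "open G" "(x, y) \<in> G"
    "\<And>x' y'. (x', y') \<in> G \<Longrightarrow> y' \<in> cell \<tau> \<Longrightarrow> \<bar>f x y - f x' y'\<bar> < \<epsilon>"
proof -
  obtain W where W: "open W" "x \<in> W" "controlled \<tau> W"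
    using assms(1) unfolding controlled_set_def by blast
  then obtain A where A: "finite A"
    and ctrl: "\<forall>y\<in>cell \<tau>. \<forall>z\<in>cell \<tau>. (\<forall>a\<in>A. \<bar>f a y - f a z\<bar> < \<epsilon>/6) \<longrightarrow>
      (\<forall>t\<in>W. \<bar>f t y - f t z\<bar> \<le> \<epsilon>/3)"
    unfolding controlled_def by blast
  define W' where "W' = W \<inter> {x'. \<bar>f x' y - f x y\<bar> < \<epsilon>/3}"
  define N where "N = (\<Inter>a\<in>A. {y'. \<bar>f a y - f a y'\<bar> < \<epsilon>/6})"
  have "open {x'. \<bar>f x' y - f x y\<bar> < \<epsilon>/3}"
    by (rule open_Collect_less) (intro continuous_intros continuous_on_fst_arg)+
  then have "open W'"
    unfolding W'_def using W(1) by (rule open_Int[rotated])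
  moreover have "open {y'. \<bar>f a y - f a y'\<bar> < \<epsilon>/6}" for a
    by (rule open_Collect_less) (intro continuous_intros continuous_on_snd_arg)+
  then have "open N"
    unfolding N_def using A by (intro open_INT) auto
  moreover have "(x, y) \<in> W' \<times> N"
    unfolding W'_def N_def using W(2) eps_pos by simp
  moreover have "\<bar>f x y - f x' y'\<bar> < \<epsilon>" if "(x', y') \<in> W' \<times> N" "y' \<in> cell \<tau>" for x' y'
  proof -
    have "\<bar>f x' y - f x y\<bar> < \<epsilon>/3" "x' \<in> W" "\<forall>a\<in>A. \<bar>f a y - f a y'\<bar> < \<epsilon>/6"
      using that(1) unfolding W'_def N_def by auto
    moreover from this have "\<bar>f x' y - f x' y'\<bar> \<le> \<epsilon>/3"
      using ctrl assms(2) that(2) by blast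
    ultimately show ?thesis by linarith
  qed
  ultimately show ?thesis
    using that[of "W' \<times> N"] by (simp add: open_Times)
qed

lemma uncontrolled_subset_UN_snoc: "uncontrolled \<tau> \<subseteq> (\<Union>k. uncontrolled (\<tau> @ [k]))"
proof
  fix x assume "x \<in> uncontrolled \<tau>"
  then obtain y where y: "y \<in> cell \<tau>" "\<forall>\<tau>'. \<tau>' \<noteq> [] \<and> y \<in> cell \<tau>' \<longrightarrow> x \<notin> controlled_set \<tau>'"
    unfolding uncontrolled_def by blast
  have "y \<in> (\<Union>k. U (length \<tau>) k)" using covers by simp
  then obtain k where "y \<in> U (length \<tau>) k" by blast
  with y have "x \<in> uncontrolled (\<tau> @ [k])"
    unfolding uncontrolled_def by (auto simp: cell_snoc)
  then show "x \<in> (\<Union>k. uncontrolled (\<tau> @ [k]))" by blast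
qed

lemma bad_core_disjoint_controlled_set:
  assumes "\<tau> \<noteq> []" shows "bad_core \<tau> \<inter> controlled_set \<tau> = {}"
proof -
  have "uncontrolled \<tau> \<inter> controlled_set \<tau> = {}"
    using assms unfolding uncontrolled_def by blast
  then have "first_category (uncontrolled \<tau> \<inter> controlled_set \<tau>)"
    by (simp add: first_category_nowhere_dense nowhere_dense_def)
  then have "\<not> second_category_at (uncontrolled \<tau>) x" if "x \<in> controlled_set \<tau>" for x
    unfolding second_category_at_def using that open_controlled_set by blast
  then show ?thesis
    unfolding bad_core_def using interior_subset by blast
qed

lemma bad_core_meets_snoc:
  assumes "open W" "W \<noteq> {}" "W \<subseteq> bad_core \<tau>"
  shows "\<exists>k. W \<inter> bad_core (\<tau> @ [k]) \<noteq> {}"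
proof (rule ccontr)
  assume none: "\<nexists>k. W \<inter> bad_core (\<tau> @ [k]) \<noteq> {}"
  have "uncontrolled \<tau> \<inter> W \<subseteq> (\<Union>k. uncontrolled (\<tau> @ [k]) - bad_core (\<tau> @ [k]))"
  proof
    fix x assume x: "x \<in> uncontrolled \<tau> \<inter> W"
    then obtain k where "x \<in> uncontrolled (\<tau> @ [k])"
      using uncontrolled_subset_UN_snoc by blast
    moreover have "x \<notin> bad_core (\<tau> @ [k])"
      using none x by blast
    ultimately show "x \<in> (\<Union>k. uncontrolled (\<tau> @ [k]) - bad_core (\<tau> @ [k]))" by blast
  qed
  moreover have "first_category (\<Union>k. uncontrolled (\<tau> @ [k]) - bad_core (\<tau> @ [k]))"
    unfolding bad_core_def by (rule first_category_UN[OF Banach_category_theorem])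
  ultimately have "first_category (uncontrolled \<tau> \<inter> W)"
    by (rule first_category_subset[rotated])
  moreover obtain x where "x \<in> W"
    using assms(2) by blast
  moreover have "second_category_at (uncontrolled \<tau>) x"
    using assms(3) \<open>x \<in> W\<close> interior_subset unfolding bad_core_def by blast
  ultimately show False
    using assms(1) unfolding second_category_at_def by blast
qed

lemma bad_core_separating_pair:
  assumes "\<tau> \<noteq> []" "open W" "W \<noteq> {}" "W \<subseteq> bad_core \<tau>" "finite A"
  obtains V y z where "open V" "V \<noteq> {}" "V \<subseteq> W" "y \<in> cell \<tau>" "z \<in> cell \<tau>"
    "\<forall>a\<in>A. \<bar>f a y - f a z\<bar> < \<epsilon>/6" "\<forall>t\<in>V. \<epsilon>/3 < \<bar>f t y - f t z\<bar>"
proof -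
  have "\<not> controlled \<tau> W"
    using assms(1-4) bad_core_disjoint_controlled_set unfolding controlled_set_def by blast
  then have "\<not> (\<forall>y\<in>cell \<tau>. \<forall>z\<in>cell \<tau>. (\<forall>a\<in>A. \<bar>f a y - f a z\<bar> < \<epsilon>/6) \<longrightarrow>
      (\<forall>t\<in>W. \<bar>f t y - f t z\<bar> \<le> \<epsilon>/3))"
    using assms(5) unfolding controlled_def by blast
  then obtain y z t where yz: "y \<in> cell \<tau>" "z \<in> cell \<tau>" "\<forall>a\<in>A. \<bar>f a y - f a z\<bar> < \<epsilon>/6"
    and t: "t \<in> W" "\<epsilon>/3 < \<bar>f t y - f t z\<bar>"
    by (auto simp: not_le)
  define V where "V = W \<inter> {t. \<epsilon>/3 < \<bar>f t y - f t z\<bar>}"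
  have "open {t. \<epsilon>/3 < \<bar>f t y - f t z\<bar>}"
    by (rule open_Collect_less) (intro continuous_intros continuous_on_fst_arg)+
  then have "open V"
    unfolding V_def using assms(2) by (rule open_Int[rotated])
  moreover have "t \<in> V" "V \<subseteq> W" "\<forall>t\<in>V. \<epsilon>/3 < \<bar>f t y - f t z\<bar>"
    unfolding V_def using t by auto
  ultimately show ?thesis using that yz by blast
qed

lemma beta_strategy_separating:
  assumes "bad_core [k0] \<noteq> {}"
  obtains s :: "('a set \<times> 'a) list \<Rightarrow> 'a set" and node :: "('a set \<times> 'a) list \<Rightarrow> nat list"
    and y z :: "('a set \<times> 'a) list \<Rightarrow> 'b"
  where "beta_strategy s" "node [] = [k0]" "\<And>h m. \<exists>k. node (h @ [m]) = node h @ [k]"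
    "\<And>h. legal_history s h \<Longrightarrow> y h \<in> cell (node h) \<and> z h \<in> cell (node h)"
    "\<And>h m. legal_history s h \<Longrightarrow> m \<in> set h \<Longrightarrow> \<bar>f (snd m) (y h) - f (snd m) (z h)\<bar> < \<epsilon>/6"
    "\<And>h t. legal_history s h \<Longrightarrow> t \<in> s h \<Longrightarrow> \<epsilon>/3 < \<bar>f t (y h) - f t (z h)\<bar>"
proof -
  define node where "node h = foldl (\<lambda>\<tau> m. \<tau> @ [SOME k. fst m \<inter> bad_core (\<tau> @ [k]) \<noteq> {}]) [k0] h"
    for h :: "('a set \<times> 'a) list"
  define arena where "arena h = (if h = [] then UNIV else fst (last h)) \<inter> bad_core (node h)"
    for h :: "('a set \<times> 'a) list"
  define separating where "separating h V y z \<longleftrightarrow> open V \<and> V \<noteq> {} \<and> V \<subseteq> arena h \<and>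
    y \<in> cell (node h) \<and> z \<in> cell (node h) \<and> (\<forall>m\<in>set h. \<bar>f (snd m) y - f (snd m) z\<bar> < \<epsilon>/6) \<and>
    (\<forall>t\<in>V. \<epsilon>/3 < \<bar>f t y - f t z\<bar>)" for h V y z
  define move where "move h = (SOME p. separating h (fst p) (fst (snd p)) (snd (snd p)))" for h
  define s where "s h = fst (move h)" for h
  define y where "y h = fst (snd (move h))" for h
  define z where "z h = snd (snd (move h))" for h
  have node_snoc: "node (h @ [m]) = node h @ [SOME k. fst m \<inter> bad_core (node h @ [k]) \<noteq> {}]" for h m
    by (simp add: node_def)
  have node_ne: "node h \<noteq> []" for h
    by (induction h rule: rev_induct) (simp_all add: node_def)
  have move: "separating h (s h) (y h) (z h)" if "open (arena h)" "arena h \<noteq> {}" for h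
  proof -
    have "arena h \<subseteq> bad_core (node h)" unfolding arena_def by blast
    from bad_core_separating_pair[OF node_ne that this finite_imageI[OF finite_set]]
    obtain V y' z' where "separating h V y' z'"
      unfolding separating_def by (metis image_eqI)
    then have "\<exists>p. separating h (fst p) (fst (snd p)) (snd (snd p))" by auto
    then show ?thesis
      unfolding s_def y_def z_def move_def by (rule someI_ex)
  qed
  have arena: "open (arena h) \<and> arena h \<noteq> {}" if "legal_history s h" for h
    using that
  proof (induction h rule: rev_induct)
    case Nil
    then show ?case using assms by (simp add: arena_def node_def bad_core_def)
  next
    case (snoc m h)
    note m = legal_history_snocD[OF snoc.prems]
    have "fst m \<subseteq> bad_core (node h)"
      using m(4) move snoc.IH[OF m(1)] unfolding separating_def arena_def by blast
    then have "\<exists>k. fst m \<inter> bad_core (node h @ [k]) \<noteq> {}"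
      using m(2,3) by (rule bad_core_meets_snoc[rotated 2])
    then have "fst m \<inter> bad_core (node (h @ [m])) \<noteq> {}"
      unfolding node_snoc by (rule someI_ex)
    then show ?case
      using m(2) by (auto simp: arena_def bad_core_def)
  qed
  have sep: "separating h (s h) (y h) (z h)" if "legal_history s h" for h
    using arena[OF that] move by blast
  have "legal_history s []"
    unfolding legal_history_def by simp
  then have "open (s []) \<and> s [] \<noteq> {}"
    using sep unfolding separating_def by blast
  moreover have "open (s h) \<and> s h \<noteq> {} \<and> s h \<subseteq> fst (last h)" if "legal_history s h" "h \<noteq> []" for h
    using sep[OF that(1)] that(2) unfolding separating_def arena_def by auto
  ultimately have "beta_strategy s"
    unfolding beta_strategy_def by blast
  moreover have "node [] = [k0]"
    by (simp add: node_def)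
  moreover have "\<exists>k. node (h @ [m]) = node h @ [k]" for h m
    by (simp add: node_snoc)
  moreover have "y h \<in> cell (node h) \<and> z h \<in> cell (node h)" if "legal_history s h" for h
    using sep[OF that] unfolding separating_def by blast
  moreover have "\<bar>f (snd m) (y h) - f (snd m) (z h)\<bar> < \<epsilon>/6" if "legal_history s h" "m \<in> set h" for h m
    using sep[OF that(1)] that(2) unfolding separating_def by blast
  moreover have "\<epsilon>/3 < \<bar>f t (y h) - f t (z h)\<bar>" if "legal_history s h" "t \<in> s h" for h t
    using sep[OF that(1)] that(2) unfolding separating_def by blast
  ultimately show ?thesis
    by (rule that)
qed

lemma beta_wins_play:
  assumes \<phi>: "\<And>y. \<phi> y = (\<lambda>x. f x y)" and pc: "covers_pair_complete \<phi> \<Gamma> U"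
    and node: "length (node []) = 1" "\<And>h m. \<exists>k. node (h @ [m]) = node h @ [k]"
    and cells: "\<And>h. legal_history s h \<Longrightarrow> y h \<in> cell (node h) \<and> z h \<in> cell (node h)"
    and close: "\<And>h m. legal_history s h \<Longrightarrow> m \<in> set h \<Longrightarrow> \<bar>f (snd m) (y h) - f (snd m) (z h)\<bar> < \<epsilon>/6"
    and apart: "\<And>h t. legal_history s h \<Longrightarrow> t \<in> s h \<Longrightarrow> \<epsilon>/3 < \<bar>f t (y h) - f t (z h)\<bar>"
    and play: "play_follows s V a"
  shows "\<not> alpha_wins \<Gamma> V a"
proof
  define hist where "hist n = map (\<lambda>i. (V i, a i)) [0..<n]" for n
  have legal: "legal_history s (hist n)" for n
    unfolding hist_def using play by (rule play_follows_legal_history)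
  define \<sigma> where "\<sigma> i = node (hist i) ! i" for i
  have "node (hist n) = map \<sigma> [0..<Suc n]" for n
    unfolding \<sigma>_def using node
    by (intro snoc_chain_eq_map_upt[where L = "\<lambda>n. node (hist n)"]) (simp_all add: hist_def)
  then have "cell (node (hist n)) = (\<Inter>i\<in>{..n}. U i (\<sigma> i))" for n
    by (simp only: cell_map_upt)
  then have YZ: "y (hist n) \<in> (\<Inter>i\<in>{..n}. U i (\<sigma> i)) \<and> z (hist n) \<in> (\<Inter>i\<in>{..n}. U i (\<sigma> i))" for n
    using cells[OF legal] by simp
  have "seq_pair_complete \<phi> \<Gamma> (\<lambda>n. \<Inter>i\<in>{..n}. U i (\<sigma> i))"
    using pc unfolding covers_pair_complete_def by blast
  from this[unfolded seq_pair_complete_def, rule_format, OF YZ]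
  obtain g where g: "g \<in> \<Gamma>" "seq_cluster_point (\<lambda>n. \<phi> (y (hist n)) - \<phi> (z (hist n))) g"
    by blast
  assume "alpha_wins \<Gamma> V a"
  then obtain t where t: "\<And>n. t \<in> V n" "g t \<in> closure {g (a n) |n. True}"
    using g(1) unfolding alpha_wins_def by blast
  have "g \<in> {h. \<epsilon>/3 \<le> \<bar>h t\<bar>}"
  proof (rule seq_cluster_point_in_closed[OF g(2)])
    show "closed {h :: 'a \<Rightarrow> real. \<epsilon>/3 \<le> \<bar>h t\<bar>}"
      by (rule closed_Collect_le[OF continuous_on_const continuous_on_abs_coordinate])
    have "t \<in> s (hist n)" for n
      using t(1) play unfolding play_follows_def hist_def by blast
    then show "\<forall>\<^sub>F n in sequentially. \<phi> (y (hist n)) - \<phi> (z (hist n)) \<in> {h. \<epsilon>/3 \<le> \<bar>h t\<bar>}"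
      using apart[OF legal] by (simp add: \<phi> less_imp_le)
  qed
  moreover have "g \<in> {h. \<bar>h (a m)\<bar> \<le> \<epsilon>/6}" for m
  proof (rule seq_cluster_point_in_closed[OF g(2)])
    show "closed {h :: 'a \<Rightarrow> real. \<bar>h (a m)\<bar> \<le> \<epsilon>/6}"
      by (rule closed_Collect_le[OF continuous_on_abs_coordinate continuous_on_const])
    have late: "\<bar>f (a m) (y (hist n)) - f (a m) (z (hist n))\<bar> < \<epsilon>/6" if "m < n" for n
      using close[OF legal, of "(V m, a m)" n] that by (simp add: hist_def)
    show "\<forall>\<^sub>F n in sequentially. \<phi> (y (hist n)) - \<phi> (z (hist n)) \<in> {h. \<bar>h (a m)\<bar> \<le> \<epsilon>/6}"
      using eventually_gt_at_top[of m] by (rule eventually_mono) (auto simp: \<phi> dest: late)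
  qed
  then have "closure {g (a n) |n. True} \<subseteq> {r. \<bar>r\<bar> \<le> \<epsilon>/6}"
    by (intro closure_minimal closed_Collect_le continuous_intros) auto
  ultimately show False
    using t(2) eps_pos by auto
qed

lemma bad_core_nonempty_beta_wins:
  assumes "\<And>y. \<phi> y = (\<lambda>x. f x y)" "covers_pair_complete \<phi> \<Gamma> U" "bad_core [k0] \<noteq> {}"
  shows "\<not> sigma_beta_defavorable \<Gamma>"
proof -
  obtain s node y z where strategy: "beta_strategy s" and node: "node [] = [k0]"
    "\<And>h m. \<exists>k. node (h @ [m]) = node h @ [k]"
    and cells: "\<And>h. legal_history s h \<Longrightarrow> y h \<in> cell (node h) \<and> z h \<in> cell (node h)"
    and close: "\<And>h m. legal_history s h \<Longrightarrow> m \<in> set h \<Longrightarrow> \<bar>f (snd m) (y h) - f (snd m) (z h)\<bar> < \<epsilon>/6"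
    and apart: "\<And>h t. legal_history s h \<Longrightarrow> t \<in> s h \<Longrightarrow> \<epsilon>/3 < \<bar>f t (y h) - f t (z h)\<bar>"
    by (rule beta_strategy_separating[OF assms(3)]) (rule that)
  have "\<not> alpha_wins \<Gamma> V a" if "play_follows s V a" for V a
    by (rule beta_wins_play[OF assms(1,2) _ node(2) cells close apart that]) (simp add: node(1))
  with strategy show ?thesis
    unfolding sigma_beta_defavorable_def by blast
qed

definition exceptional_set :: "'a set" where
  "exceptional_set = (\<Union>\<tau>. uncontrolled \<tau> - bad_core \<tau>)"

lemma first_category_exceptional_set: "first_category exceptional_set"
  unfolding exceptional_set_def bad_core_def
  by (rule first_category_UN[OF Banach_category_theorem])

lemma exists_controlling_cell:
  assumes "\<And>y. \<phi> y = (\<lambda>x. f x y)" "covers_pair_complete \<phi> \<Gamma> U" "sigma_beta_defavorable \<Gamma>"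
    and "x \<notin> exceptional_set"
  obtains \<tau> where "\<tau> \<noteq> []" "y \<in> cell \<tau>" "x \<in> controlled_set \<tau>"
proof (rule ccontr)
  assume "\<not> thesis"
  then have none: "\<forall>\<tau>. \<tau> \<noteq> [] \<and> y \<in> cell \<tau> \<longrightarrow> x \<notin> controlled_set \<tau>"
    using that by blast
  have "y \<in> (\<Union>k. U 0 k)" using covers by simp
  then obtain k where "y \<in> cell [k]"
    by (auto simp: cell_def)
  with none have "x \<in> uncontrolled [k]"
    unfolding uncontrolled_def by blast
  with assms(4) have "bad_core [k] \<noteq> {}"
    unfolding exceptional_set_def by blast
  with bad_core_nonempty_beta_wins[OF assms(1,2)] assms(3) show False
    by blast
qed

lemma small_oscillation_off_exceptional_set:
  assumes "\<And>y. \<phi> y = (\<lambda>x. f x y)" "covers_pair_complete \<phi> \<Gamma> U" "sigma_beta_defavorable \<Gamma>"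
    and "x \<notin> exceptional_set"
  shows "\<exists>k \<sigma> W. y \<in> (\<Inter>i\<in>{..k}. U i (\<sigma> i)) \<and> open W \<and> (x, y) \<in> W \<and>
    (\<forall>x' y'. (x', y') \<in> W \<and> y' \<in> (\<Inter>i\<in>{..k}. U i (\<sigma> i)) \<longrightarrow> \<bar>f x y - f x' y'\<bar> < \<epsilon>)"
proof -
  obtain \<tau> where \<tau>: "\<tau> \<noteq> []" "y \<in> cell \<tau>" "x \<in> controlled_set \<tau>"
    by (rule exists_controlling_cell[OF assms])
  obtain W where W: "open W" "(x, y) \<in> W"
    "\<And>x' y'. (x', y') \<in> W \<Longrightarrow> y' \<in> cell \<tau> \<Longrightarrow> \<bar>f x y - f x' y'\<bar> < \<epsilon>"
    using controlled_set_oscillation[OF \<tau>(3,2)] by blast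
  have "cell \<tau> = (\<Inter>i\<in>{..length \<tau> - 1}. U i (\<tau> ! i))"
    using \<tau>(1) by (intro cell_eq_INT_atMost) auto
  with \<tau>(2) W show ?thesis
    by (intro exI[of _ "length \<tau> - 1"] exI[of _ "(!) \<tau>"] exI[of _ W]) auto
qed

end

theorem theorem3p1:
  fixes f :: "'a::topological_space \<Rightarrow> 'b::topological_space \<Rightarrow> real"
    and \<phi> :: "'b \<Rightarrow> ('a \<Rightarrow> real)"
    and \<Gamma> :: "('a \<Rightarrow> real) set"
    and U :: "nat \<Rightarrow> nat \<Rightarrow> 'b set"
  assumes "separately_continuous f"
    and "\<And>y. \<phi> y = (\<lambda>x. f x y)"
    and "\<And>n. (\<Union>k. U n k) = UNIV"
    and "sigma_beta_defavorable \<Gamma>"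
    and "covers_pair_complete \<phi> \<Gamma> U"
  shows "\<forall>\<epsilon>>0. \<exists>R::'a set. residual R \<and>
           (\<forall>x\<in>R. \<forall>y. \<exists>(k::nat) (\<sigma>::nat \<Rightarrow> nat) (W::('a \<times> 'b) set).
              y \<in> (\<Inter>i\<in>{..k}. U i (\<sigma> i)) \<and> open W \<and> (x, y) \<in> W \<and>
              (\<forall>x' y'. (x', y') \<in> W \<and> y' \<in> (\<Inter>i\<in>{..k}. U i (\<sigma> i)) \<longrightarrow>
                 \<bar>f x y - f x' y'\<bar> < \<epsilon>))"
proof (intro allI impI)
  fix \<epsilon> :: real assume "\<epsilon> > 0"
  interpret oscillation_setting f U \<epsilon>
    using assms(1,3) \<open>\<epsilon> > 0\<close> by unfold_locales
  have "residual (- exceptional_set)"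
    unfolding residual_def double_compl by (rule first_category_exceptional_set)
  with small_oscillation_off_exceptional_set[OF assms(2,5,4)]
  show "\<exists>R. residual R \<and> (\<forall>x\<in>R. \<forall>y. \<exists>k \<sigma> W. y \<in> (\<Inter>i\<in>{..k}. U i (\<sigma> i)) \<and> open W \<and>
      (x, y) \<in> W \<and> (\<forall>x' y'. (x', y') \<in> W \<and> y' \<in> (\<Inter>i\<in>{..k}. U i (\<sigma> i)) \<longrightarrow> \<bar>f x y - f x' y'\<bar> < \<epsilon>))"
    by (intro exI[of _ "- exceptional_set"]) blast
qed

end
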